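(* Let $A_1,A_2,B,D\in\mathbb R^{n\times n}$ and $K,L_0,L_1,L_2,\delta>0$ satisfy: (i) $A_1+A_1^\top$, $A_2+A_2^\top$ and $B+B^\top$ are positive semidefinite; (ii) $\|A_1\|_\sigma,\|A_2\|_\sigma,\|B\|_\sigma\le L_0\le 1/106$; (iii) $D+D^\top\preceq L_1(B^\top B+A_1A_1^\top)+K\delta^2 I$; (iv) $D^\top D\preceq L_2 B^\top B$; (v) $10L_0+\frac{4L_2}{L_0^2}+5L_1\le 24/50$; (vi) $\|X-Y\|_\sigma\le\delta$ for any two $X,Y\in\{A_1,A_2,B\}$. Then $$\|I-A_1+A_2B+D\|_\sigma\le\sqrt{1+(400+K)\delta^2}.$$
   Context: $\|\cdot\|_\sigma$ is the spectral norm; for symmetric matrices $S\preceq T$ means $T-S$ is positive semidefinite. *)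

theory Defs
  imports "HOL-Analysis.Analysis"
begin

definition spec_norm :: "real^'n^'n \<Rightarrow> real" where
  "spec_norm M = onorm (\<lambda>x. M *v x)"

definition psd :: "real^'n^'n \<Rightarrow> bool" where
  "psd M \<longleftrightarrow> (\<forall>x. 0 \<le> x \<bullet> (M *v x))"

definition loewner_le :: "real^'n^'n \<Rightarrow> real^'n^'n \<Rightarrow> bool" where
  "loewner_le S T \<longleftrightarrow> psd (T - S)"

end

theory Submission
  imports Defs
begin

text \<open>Write \<open>M = I - A1 + A2 B + D\<close> and, for a vector \<open>x\<close>, \<open>u = A1 x\<close>, \<open>v = A1\<^sup>T x\<close>,
  \<open>r = (A2 B + D) x\<close>, so that \<open>M x = x - u + r\<close>. In the expansion of \<open>\<parallel>M x\<parallel>\<^sup>2\<close> the terms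
  \<open>\<parallel>u\<parallel>\<^sup>2 + 2\<langle>u,v\<rangle> - 2\<langle>x,u\<rangle>\<close> are strongly negative: Cauchy-Schwarz for the semidefinite form
  \<open>A1 + A1\<^sup>T\<close> gives \<open>\<parallel>u + v\<parallel>\<^sup>2 \<le> 4 L0 \<langle>x, A1 x\<rangle>\<close>, and \<open>L0\<close> is small, so they are at most
  \<open>-(2/5)(\<parallel>u\<parallel>\<^sup>2 + \<parallel>v\<parallel>\<^sup>2)\<close>. Writing \<open>A2 B = A1\<^sup>2 + (A2 - A1) B + A1 (B - A1)\<close>, the remaining
  part of \<open>\<langle>x, r\<rangle>\<close> is of size \<open>\<delta>\<parallel>x\<parallel>(\<parallel>u\<parallel> + \<delta>\<parallel>x\<parallel> + \<parallel>v\<parallel>)\<close> or is controlled by (iii), and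
  (iv) makes \<open>r\<close> itself tiny. Everything left is a quadratic form in \<open>\<parallel>u\<parallel>\<close>, \<open>\<parallel>v\<parallel>\<close>, \<open>\<delta>\<parallel>x\<parallel>\<close>
  whose positive part is absorbed by the negative one up to \<open>11 \<delta>\<^sup>2\<parallel>x\<parallel>\<^sup>2\<close>.\<close>

lemma norm_mv_le_spec_norm: "norm (M *v x) \<le> spec_norm M * norm (x::real^'n)"
  unfolding spec_norm_def by (rule onorm) simp

lemma norm_mv_le: "spec_norm M \<le> L \<Longrightarrow> norm (M *v x) \<le> L * norm (x::real^'n)"
  by (meson norm_mv_le_spec_norm mult_right_mono norm_ge_zero order_trans)

lemma inner_mv_transpose: "(x::real^'n) \<bullet> (M *v y) = (transpose M *v x) \<bullet> y"
  by (simp add: dot_lmul_matrix)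

lemma quadratic_form_add_transpose:
  "x \<bullet> ((A + transpose A) *v x) = 2 * (x \<bullet> (A *v (x::real^'n)))"
  by (simp add: matrix_vector_mult_add_rdistrib inner_add_right dot_lmul_matrix
      inner_commute[of x "x v* A"])

lemma quadratic_form_transpose_mult:
  "x \<bullet> ((transpose M ** M) *v x) = norm (M *v (x::real^'n))^2"
  by (simp add: matrix_vector_mul_assoc[symmetric] inner_commute[of x] dot_lmul_matrix
      dot_square_norm)

lemma quadratic_form_mult_transpose:
  "x \<bullet> ((M ** transpose M) *v x) = norm (transpose M *v (x::real^'n))^2"
  by (simp add: matrix_vector_mul_assoc[symmetric] inner_mv_transpose[of x M] dot_square_norm)

lemma loewner_le_quadratic_form:
  "loewner_le S T \<Longrightarrow> x \<bullet> (S *v x) \<le> x \<bullet> (T *v (x::real^'n))"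
  unfolding loewner_le_def psd_def
  by (metis diff_ge_0_iff_ge inner_diff_right matrix_vector_mult_diff_rdistrib)

lemma psd_norm_mv_sq_le:
  fixes S :: "real^'n^'n"
  assumes "psd S" "transpose S = S" "0 < c" "\<And>y. y \<bullet> (S *v y) \<le> c * norm y^2"
  shows "norm (S *v x)^2 \<le> c * (x \<bullet> (S *v x))"
proof -
  define y where "y = S *v x"
  have sym: "x \<bullet> (S *v y) = norm y^2"
    using inner_mv_transpose[of x S y] assms(2) by (simp add: y_def dot_square_norm)
  have "0 \<le> (x - y /\<^sub>R c) \<bullet> (S *v (x - y /\<^sub>R c))"
    using assms(1) unfolding psd_def by blast
  also have "\<dots> = x \<bullet> (S *v x) - 2 * norm y^2 / c + (y \<bullet> (S *v y)) / c^2"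
    using sym assms(3)
    by (simp add: matrix_vector_mult_diff_distrib matrix_vector_mult_scaleR inner_diff_left
        inner_diff_right flip: y_def) (simp add: dot_square_norm power2_eq_square field_simps)
  also have "\<dots> \<le> x \<bullet> (S *v x) - norm y^2 / c"
    using assms(3) assms(4)[of y] by (simp add: power2_eq_square divide_simps algebra_simps)
  finally show ?thesis
    using assms(3) by (simp add: y_def field_simps)
qed

lemma norm_add_transpose_mv_sq_le:
  fixes A :: "real^'n^'n"
  assumes psd: "psd (A + transpose A)" and "spec_norm A \<le> L" "0 < L"
  shows "norm ((A + transpose A) *v x)^2 \<le> 4 * L * (x \<bullet> (A *v x))"
proof -
  have "y \<bullet> ((A + transpose A) *v y) \<le> 2 * L * norm y^2" for y :: "real^'n"
  proof -
    have "y \<bullet> (A *v y) \<le> norm y * (L * norm y)"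
      using norm_cauchy_schwarz[of y "A *v y"] norm_mv_le[OF assms(2), of y]
      by (meson mult_left_mono norm_ge_zero order_trans)
    then show ?thesis
      by (simp add: quadratic_form_add_transpose power2_eq_square mult_ac)
  qed
  moreover have "transpose (A + transpose A) = A + transpose A"
    by (simp add: transpose_def vec_eq_iff add.commute)
  ultimately have "norm ((A + transpose A) *v x)^2 \<le> 2 * L * (x \<bullet> ((A + transpose A) *v x))"
    using psd assms(3) by (intro psd_norm_mv_sq_le) auto
  then show ?thesis
    by (simp add: quadratic_form_add_transpose)
qed

lemma norm_sq_add_inner_le:
  fixes u v :: "'a::real_inner"
  assumes "3 * norm (u + v)^2 \<le> 2 * a"
  shows "norm u^2 + 2 * (u \<bullet> v) - 2 * a \<le> -(2/5) * (norm u^2 + norm v^2)"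
proof -
  have "(norm u - norm v)^2 \<le> norm (u + v)^2"
    using norm_triangle_ineq3[of u "-v"] by (simp add: abs_le_square_iff[symmetric])
  have "norm u^2 + 2 * (u \<bullet> v) - 2 * a = norm (u + v)^2 - norm v^2 - 2 * a"
    by (simp add: power2_norm_eq_inner inner_add_left inner_add_right inner_commute)
  also have "\<dots> \<le> -2 * (norm u - norm v)^2 - norm v^2"
    using assms \<open>(norm u - norm v)^2 \<le> norm (u + v)^2\<close> by linarith
  also have "\<dots> = -(2/5) * (norm u^2 + norm v^2) - ((4 * norm u - 5 * norm v)^2 + norm v^2) / 10"
    by (simp add: power2_eq_square field_simps)
  also have "\<dots> \<le> -(2/5) * (norm u^2 + norm v^2)"
    by simp
  finally show ?thesis .
qed

lemma quadratic_budget_le: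
  fixes U V t :: real
  shows "-(2/5) * (U^2 + V^2) + 2 * t * (U + t + V) + ((U + t)^2 + V^2) / 10 + (U + t)^2 / 20
    \<le> 11 * t^2"
proof -
  have "11 * t^2 - (-(2/5) * (U^2 + V^2) + 2 * t * (U + t + V) + ((U + t)^2 + V^2) / 10
        + (U + t)^2 / 20) = (5 * U - 23 * t)^2 / 100 + (3 * V - 10 * t)^2 / 30 + 17/75 * t^2"
    by (simp add: power2_eq_square field_simps)
  moreover have "0 \<le> (5 * U - 23 * t)^2 / 100 + (3 * V - 10 * t)^2 / 30 + 17/75 * t^2"
    by simp
  ultimately show ?thesis
    by linarith
qed

locale near_identity_step =
  fixes A1 A2 B D :: "real^'n^'n" and K L0 L1 L2 \<delta> :: real
  assumes L0_pos: "0 < L0" and L1_nonneg: "0 \<le> L1" and L2_nonneg: "0 \<le> L2"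
    and \<delta>_nonneg: "0 \<le> \<delta>"
    and psd_A1: "psd (A1 + transpose A1)"
    and spec_norm_A1: "spec_norm A1 \<le> L0" and spec_norm_A2: "spec_norm A2 \<le> L0"
    and L0_le: "L0 \<le> 1/106"
    and D_sym_le: "loewner_le (D + transpose D)
      (L1 *\<^sub>R (transpose B ** B + A1 ** transpose A1) + (K * \<delta>^2) *\<^sub>R mat 1)"
    and D_gram_le: "loewner_le (transpose D ** D) (L2 *\<^sub>R (transpose B ** B))"
    and constants_le: "10 * L0 + 4 * L2 / L0^2 + 5 * L1 \<le> 24/50"
    and spec_norm_B_A1: "spec_norm (B - A1) \<le> \<delta>"
    and spec_norm_A2_A1: "spec_norm (A2 - A1) \<le> \<delta>"
begin

lemma L1_le: "L1 \<le> 1/10"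
proof -
  have "0 \<le> 4 * L2 / L0^2"
    using L2_nonneg by simp
  then show ?thesis
    using constants_le L0_pos by linarith
qed

lemma L2_le: "L2 \<le> L0^2"
proof -
  have "4 * L2 / L0^2 \<le> 1"
    using constants_le L0_pos L1_nonneg by linarith
  then show ?thesis
    using L0_pos L2_nonneg by (simp add: field_simps)
qed

lemma norm_B_mv_le: "norm (B *v x) \<le> norm (A1 *v x) + \<delta> * norm x"
proof -
  have "norm (B *v x) \<le> norm (A1 *v x) + norm ((B - A1) *v x)"
    using norm_triangle_ineq[of "A1 *v x" "(B - A1) *v x"]
    by (simp add: matrix_vector_mult_diff_rdistrib)
  then show ?thesis
    using norm_mv_le[OF spec_norm_B_A1, of x] by linarith
qed

lemma norm_D_mv_le: "norm (D *v x) \<le> L0 * norm (B *v x)"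
proof (rule power2_le_imp_le)
  have "norm (D *v x)^2 \<le> x \<bullet> ((L2 *\<^sub>R (transpose B ** B)) *v x)"
    using loewner_le_quadratic_form[OF D_gram_le] by (simp add: quadratic_form_transpose_mult)
  also have "\<dots> = L2 * norm (B *v x)^2"
    by (simp add: scaleR_matrix_vector_assoc[symmetric] quadratic_form_transpose_mult)
  also have "\<dots> \<le> (L0 * norm (B *v x))^2"
    using L2_le by (simp add: power_mult_distrib mult_right_mono)
  finally show "norm (D *v x)^2 \<le> (L0 * norm (B *v x))^2" .
  show "0 \<le> L0 * norm (B *v x)"
    using L0_pos by simp
qed

lemma norm_A2_B_D_mv_le: "norm ((A2 ** B + D) *v x) \<le> (norm (A1 *v x) + \<delta> * norm x) / 50"
proof -
  have "norm ((A2 ** B + D) *v x) \<le> norm (A2 *v (B *v x)) + norm (D *v x)"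
    by (simp add: matrix_vector_mult_add_rdistrib matrix_vector_mul_assoc norm_triangle_ineq)
  also have "\<dots> \<le> 2 * L0 * norm (B *v x)"
    using norm_mv_le[OF spec_norm_A2, of "B *v x"] norm_D_mv_le[of x] by linarith
  also have "\<dots> \<le> 1/50 * norm (B *v x)"
    using L0_le by (intro mult_right_mono) auto
  also have "\<dots> \<le> (norm (A1 *v x) + \<delta> * norm x) / 50"
    using norm_B_mv_le[of x] by simp
  finally show ?thesis .
qed

lemma inner_A2_B_minus_A1_A1_le:
  "x \<bullet> ((A2 ** B - A1 ** A1) *v x)
    \<le> \<delta> * norm x * (norm (A1 *v x) + \<delta> * norm x + norm (transpose A1 *v x))"
proof -
  have "(A2 ** B - A1 ** A1) *v x = (A2 - A1) *v (B *v x) + A1 *v ((B - A1) *v x)"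
    by (simp add: matrix_vector_mul_assoc[symmetric] matrix_vector_mult_diff_rdistrib
        matrix_vector_mult_diff_distrib)
  then have "x \<bullet> ((A2 ** B - A1 ** A1) *v x)
      = x \<bullet> ((A2 - A1) *v (B *v x)) + (transpose A1 *v x) \<bullet> ((B - A1) *v x)"
    by (simp only: inner_add_right inner_mv_transpose[of x A1])
  also have "\<dots> \<le> norm x * (\<delta> * norm (B *v x)) + norm (transpose A1 *v x) * (\<delta> * norm x)"
  proof (rule add_mono)
    show "x \<bullet> ((A2 - A1) *v (B *v x)) \<le> norm x * (\<delta> * norm (B *v x))"
      using norm_cauchy_schwarz[of x "(A2 - A1) *v (B *v x)"]
        norm_mv_le[OF spec_norm_A2_A1, of "B *v x"]
      by (meson mult_left_mono norm_ge_zero order_trans)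
    show "(transpose A1 *v x) \<bullet> ((B - A1) *v x) \<le> norm (transpose A1 *v x) * (\<delta> * norm x)"
      using norm_cauchy_schwarz[of "transpose A1 *v x" "(B - A1) *v x"]
        norm_mv_le[OF spec_norm_B_A1, of x]
      by (meson mult_left_mono norm_ge_zero order_trans)
  qed
  also have "\<dots> = \<delta> * norm x * (norm (B *v x) + norm (transpose A1 *v x))"
    by (simp add: algebra_simps)
  also have "\<dots> \<le> \<delta> * norm x * (norm (A1 *v x) + \<delta> * norm x + norm (transpose A1 *v x))"
    using norm_B_mv_le[of x] \<delta>_nonneg by (intro mult_left_mono) auto
  finally show ?thesis .
qed

lemma inner_D_mv_le:
  "2 * (x \<bullet> (D *v x))
    \<le> ((norm (A1 *v x) + \<delta> * norm x)^2 + norm (transpose A1 *v x)^2) / 10 + K * \<delta>^2 * norm x^2"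
proof -
  have "2 * (x \<bullet> (D *v x)) = x \<bullet> ((D + transpose D) *v x)"
    by (simp add: quadratic_form_add_transpose)
  also have "\<dots> \<le> x \<bullet> ((L1 *\<^sub>R (transpose B ** B + A1 ** transpose A1)
      + (K * \<delta>^2) *\<^sub>R mat 1) *v x)"
    by (rule loewner_le_quadratic_form[OF D_sym_le])
  also have "\<dots> = L1 * (norm (B *v x)^2 + norm (transpose A1 *v x)^2) + K * \<delta>^2 * norm x^2"
    by (simp add: matrix_vector_mult_add_rdistrib scaleR_matrix_vector_assoc[symmetric]
        inner_add_right quadratic_form_transpose_mult quadratic_form_mult_transpose dot_square_norm)
  also have "\<dots> \<le> ((norm (A1 *v x) + \<delta> * norm x)^2 + norm (transpose A1 *v x)^2) / 10
      + K * \<delta>^2 * norm x^2"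
  proof -
    have "norm (B *v x)^2 \<le> (norm (A1 *v x) + \<delta> * norm x)^2"
      using norm_B_mv_le[of x] by (simp add: power_mono)
    then have "L1 * (norm (B *v x)^2 + norm (transpose A1 *v x)^2)
        \<le> 1/10 * ((norm (A1 *v x) + \<delta> * norm x)^2 + norm (transpose A1 *v x)^2)"
      using L1_le L1_nonneg by (intro mult_mono) auto
    then show ?thesis
      by simp
  qed
  finally show ?thesis .
qed

lemma A1_quadratic_terms_le:
  "norm (A1 *v x)^2 + 2 * ((A1 *v x) \<bullet> (transpose A1 *v x)) - 2 * (x \<bullet> (A1 *v x))
    \<le> -(2/5) * (norm (A1 *v x)^2 + norm (transpose A1 *v x)^2)"
proof (rule norm_sq_add_inner_le)
  have "0 \<le> x \<bullet> (A1 *v x)"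
    using psd_A1 unfolding psd_def by (simp add: quadratic_form_add_transpose)
  then have "12 * L0 * (x \<bullet> (A1 *v x)) \<le> 2 * (x \<bullet> (A1 *v x))"
    using L0_le by (intro mult_right_mono) auto
  moreover have "norm ((A1 + transpose A1) *v x)^2 \<le> 4 * L0 * (x \<bullet> (A1 *v x))"
    by (rule norm_add_transpose_mv_sq_le[OF psd_A1 spec_norm_A1 L0_pos])
  ultimately show "3 * norm (A1 *v x + transpose A1 *v x)^2 \<le> 2 * (x \<bullet> (A1 *v x))"
    by (simp add: matrix_vector_mult_add_rdistrib)
qed

lemma norm_step_mv_sq_le:
  "norm ((mat 1 - A1 + A2 ** B + D) *v x)^2 \<le> (1 + (11 + K) * \<delta>^2) * norm x^2"
proof -
  define u where "u = A1 *v x"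
  define v where "v = transpose A1 *v x"
  define r where "r = (A2 ** B + D) *v x"
  define t where "t = \<delta> * norm x"
  have t_nonneg: "0 \<le> t"
    using \<delta>_nonneg by (simp add: t_def)
  have "(mat 1 - A1 + A2 ** B + D) *v x = x - u + r"
    by (simp add: u_def r_def matrix_vector_mult_add_rdistrib matrix_vector_mult_diff_rdistrib)
  moreover have "x \<bullet> r = u \<bullet> v + x \<bullet> ((A2 ** B - A1 ** A1) *v x) + x \<bullet> (D *v x)"
  proof -
    have "x \<bullet> (A1 *v u) = u \<bullet> v"
      by (simp only: inner_mv_transpose[of x A1] v_def inner_commute)
    then show ?thesis
      by (simp add: r_def u_def matrix_vector_mult_add_rdistrib matrix_vector_mult_diff_rdistrib
          matrix_vector_mul_assoc[symmetric] inner_add_right inner_diff_right)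
  qed
  ultimately have expansion: "norm ((mat 1 - A1 + A2 ** B + D) *v x)^2
      = norm x^2 + (norm u^2 + 2 * (u \<bullet> v) - 2 * (x \<bullet> u))
        + 2 * (x \<bullet> ((A2 ** B - A1 ** A1) *v x)) + 2 * (x \<bullet> (D *v x))
        + (norm r^2 - 2 * (u \<bullet> r))"
    by (simp add: power2_norm_eq_inner inner_add_left inner_add_right inner_diff_left inner_diff_right
        inner_commute)
  have remainder: "norm r^2 - 2 * (u \<bullet> r) \<le> (norm u + t)^2 / 20"
  proof -
    have r_le: "norm r \<le> (norm u + t) / 50"
      using norm_A2_B_D_mv_le[of x] by (simp add: u_def r_def t_def)
    then have "norm r^2 \<le> (norm u + t)^2 / 2500"
      using power_mono[OF r_le norm_ge_zero, of 2] by (simp add: power_divide)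
    moreover have "- (u \<bullet> r) \<le> (norm u + t)^2 / 50"
    proof -
      have "- (u \<bullet> r) \<le> norm u * norm r"
        using norm_cauchy_schwarz[of "-u" r] by simp
      also have "\<dots> \<le> (norm u + t) * ((norm u + t) / 50)"
        using r_le t_nonneg by (intro mult_mono) auto
      finally show ?thesis
        by (simp add: power2_eq_square)
    qed
    ultimately show ?thesis
      using zero_le_power2[of "norm u + t"] by linarith
  qed
  have "norm ((mat 1 - A1 + A2 ** B + D) *v x)^2
      \<le> norm x^2 + (-(2/5) * (norm u^2 + norm v^2) + 2 * t * (norm u + t + norm v)
        + ((norm u + t)^2 + norm v^2) / 10 + (norm u + t)^2 / 20) + K * \<delta>^2 * norm x^2"
    using expansion remainder A1_quadratic_terms_le[of x] inner_A2_B_minus_A1_A1_le[of x]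
      inner_D_mv_le[of x]
    unfolding u_def [symmetric] v_def [symmetric] t_def [symmetric] by (simp add: mult.assoc)
  also have "\<dots> \<le> norm x^2 + 11 * t^2 + K * \<delta>^2 * norm x^2"
    using quadratic_budget_le[of "norm u" "norm v" t] by simp
  also have "\<dots> = (1 + (11 + K) * \<delta>^2) * norm x^2"
    by (simp add: t_def power_mult_distrib algebra_simps)
  finally show ?thesis .
qed

lemma spec_norm_step_le: "spec_norm (mat 1 - A1 + A2 ** B + D) \<le> sqrt (1 + (11 + K) * \<delta>^2)"
  unfolding spec_norm_def
proof (rule onorm_le)
  fix x :: "real^'n"
  have "norm ((mat 1 - A1 + A2 ** B + D) *v x) \<le> sqrt ((1 + (11 + K) * \<delta>^2) * norm x^2)"
    using norm_step_mv_sq_le[of x] by (rule real_le_rsqrt)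
  then show "norm ((mat 1 - A1 + A2 ** B + D) *v x) \<le> sqrt (1 + (11 + K) * \<delta>^2) * norm x"
    by (simp add: real_sqrt_mult)
qed

end

theorem lemma13:
  fixes A1 A2 B D :: "real^'n^'n" and K L0 L1 L2 \<delta> :: real
  assumes pos: "K > 0" "L0 > 0" "L1 > 0" "L2 > 0" "\<delta> > 0"
    and i: "psd (A1 + transpose A1)" "psd (A2 + transpose A2)" "psd (B + transpose B)"
    and ii: "spec_norm A1 \<le> L0" "spec_norm A2 \<le> L0" "spec_norm B \<le> L0" "L0 \<le> 1/106"
    and iii: "loewner_le (D + transpose D)
                (L1 *\<^sub>R (transpose B ** B + A1 ** transpose A1) + (K * \<delta>^2) *\<^sub>R mat 1)"
    and iv: "loewner_le (transpose D ** D) (L2 *\<^sub>R (transpose B ** B))"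
    and v: "10 * L0 + 4 * L2 / L0^2 + 5 * L1 \<le> 24/50"
    and vi: "\<forall>X\<in>{A1, A2, B}. \<forall>Y\<in>{A1, A2, B}. spec_norm (X - Y) \<le> \<delta>"
  shows "spec_norm (mat 1 - A1 + A2 ** B + D) \<le> sqrt (1 + (400 + K) * \<delta>^2)"
proof -
  interpret near_identity_step A1 A2 B D K L0 L1 L2 \<delta>
    using pos i(1) ii(1,2,4) iii iv v vi by unfold_locales auto
  have "sqrt (1 + (11 + K) * \<delta>^2) \<le> sqrt (1 + (400 + K) * \<delta>^2)"
    using mult_right_mono[of "11 + K" "400 + K" "\<delta>^2"] by simp
  with spec_norm_step_le show ?thesis
    by (rule order_trans)
qed

end
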